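(* For all $p,r\in(0,1]$, $$\liminf_{n\to\infty}\Big(\sum_{D\in\hat{\mathcal D}_0(n)}\pi(D)\Big)^{1/n}\ge3^r(1-r)(1-p)^2.$$
   Context: For $n\ge1$, $\hat{\mathcal D}_0(n)$ is the set indexed by pairs $(f,g)$ where $f:\{0,\dots,n\}\to\mathbb Z$ with $f_0=f_n=0$, $|f_k-f_{k-1}|\le1$, and $g:\{0,\dots,n\}\to\{1,2\}$ with $g_0=g_n=1$ and $g_k=1$ whenever $f_{k+1}-f_k\in\{-1,1\}$ ($0\le k<n$). Each pair defines $\psi$ on $\{0,\dots,2n+4\}$ into $\mathbb Z^3$: $\psi_0=(0,0,0)$; $\psi_k=(0,1,-k)$ for $1\le k\le n+1$; $\psi_{n+2}=(0,0,-n)$; $\psi_{n+3}=(0,0,-n-1)$; $\psi_{2n+4-k}=(f_k,-f_k,-k)$ for $0\le k\le n$; sinks are $(0,1,-n-1)$ and $(0,0,-n-1)$; decoration $\kappa(f_k,-f_k,-k)=g_k$, $\kappa(0,1,-k)=2$ ($1\le k\le n$), $\kappa=0$ at sinks. With $\mathbf r(1)=r$, $\mathbf r(2)=1-r$, $\pi(D):=p^2(1-p)^{|U|}\prod_{i\in U}\mathbf r(\kappa(i))$ where $U$ is the image of $\psi$ minus the two sinks ($|U|=2n+1$). *)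

theory Defs
  imports "HOL-Analysis.Analysis"
begin

type_synonym point = "int \<times> int \<times> int"

text \<open>Index pairs (f,g) of hat-D_0(n). Functions on {0..n} are represented as
  functions on nat with canonical values f k = 0, g k = 1 for k > n.\<close>
definition hatD0 :: "nat \<Rightarrow> ((nat \<Rightarrow> int) \<times> (nat \<Rightarrow> nat)) set" where
  "hatD0 n = {(f, g).
      f 0 = 0 \<and> f n = 0 \<and>
      (\<forall>k\<in>{1..n}. \<bar>f k - f (k - 1)\<bar> \<le> 1) \<and>
      (\<forall>k\<le>n. g k \<in> {1, 2}) \<and> g 0 = 1 \<and> g n = 1 \<and>
      (\<forall>k<n. f (k + 1) - f k \<in> {-1, 1} \<longrightarrow> g k = 1) \<and>
      (\<forall>k>n. f k = 0 \<and> g k = 1)}"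

definition psi :: "nat \<Rightarrow> (nat \<Rightarrow> int) \<Rightarrow> nat \<Rightarrow> point" where
  "psi n f k =
     (if k = 0 then (0, 0, 0)
      else if k \<le> n + 1 then (0, 1, - int k)
      else if k = n + 2 then (0, 0, - int n)
      else if k = n + 3 then (0, 0, - int n - 1)
      else (f (2 * n + 4 - k), - f (2 * n + 4 - k), - int (2 * n + 4 - k)))"

definition sinks :: "nat \<Rightarrow> point set" where
  "sinks n = {(0, 1, - int n - 1), (0, 0, - int n - 1)}"

definition Uset :: "nat \<Rightarrow> (nat \<Rightarrow> int) \<Rightarrow> point set" where
  "Uset n f = psi n f ` {0..2 * n + 4} - sinks n"

definition kappa :: "nat \<Rightarrow> (nat \<Rightarrow> int) \<Rightarrow> (nat \<Rightarrow> nat) \<Rightarrow> point \<Rightarrow> nat" where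
  "kappa n f g x =
     (if x \<in> sinks n then 0
      else if (\<exists>k\<in>{1..n}. x = (0, 1, - int k)) then 2
      else if (\<exists>k\<le>n. x = (f k, - f k, - int k)) then g (nat (- snd (snd x)))
      else 0)"

definition rr :: "real \<Rightarrow> nat \<Rightarrow> real" where
  "rr r i = (if i = 1 then r else if i = 2 then 1 - r else 0)"

definition piD :: "real \<Rightarrow> real \<Rightarrow> nat \<Rightarrow> (nat \<Rightarrow> int) \<Rightarrow> (nat \<Rightarrow> nat) \<Rightarrow> real" where
  "piD p r n f g = p ^ 2 * (1 - p) ^ card (Uset n f) *
      (\<Prod>i\<in>Uset n f. rr r (kappa n f g i))"

end

theory Submission
  imports Defs "HOL-Real_Asymp.Real_Asymp"
begin

text \<open>The image U of \<psi> consists of the column (0,1,-k), 1 \<le> k \<le> n, labelled 2, and the graph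
  of f, labelled by g, so \<pi>(D) = p^2 (1-p)^(2n+1) (1-r)^n \<Prod>k. r(g k) and the sum over D is a
  weighted count of Motzkin paths in which up and down steps weigh r and level steps weigh
  r + (1-r).  Their exponential growth rate is 1 + 2r \<ge> 3 powr r.  For a lower bound, read a
  word x of length m over four letters followed by the mirror image of a word y of the same
  height as such a path; by Cauchy-Schwarz over the 2m+1 possible heights the pairs (x,y)
  still carry total weight (1+2r)^(2m)/(2m+1), a loss that disappears under the n-th root.\<close>

lemma Uset_eq:
  assumes f0: "f 0 = 0" and fn: "f n = 0"
  shows "Uset n f = (\<lambda>k. (0, 1, - int k)) ` {1..n} \<union> (\<lambda>k. (f k, - f k, - int k)) ` {0..n}"
proof (rule set_eqI, rule iffI)
  fix x assume "x \<in> Uset n f"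
  then obtain k where k: "k \<le> 2*n+4" "x = psi n f k" "x \<notin> sinks n"
    unfolding Uset_def by auto
  consider "k = 0" | "1 \<le> k \<and> k \<le> n" | "k = n+1" | "k = n+2" | "k = n+3" | "n+4 \<le> k"
    by linarith
  then show "x \<in> (\<lambda>k. (0, 1, - int k)) ` {1..n} \<union> (\<lambda>k. (f k, - f k, - int k)) ` {0..n}"
  proof cases
    case 6
    then have "x = (f (2*n+4-k), - f (2*n+4-k), - int (2*n+4-k))" "2*n+4-k \<in> {0..n}"
      using k by (auto simp: psi_def)
    then show ?thesis by blast
  qed (use k f0 fn in \<open>force simp: psi_def sinks_def\<close>)+
next
  fix x assume "x \<in> (\<lambda>k. (0, 1, - int k)) ` {1..n} \<union> (\<lambda>k. (f k, - f k, - int k)) ` {0..n}"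
  then obtain k where "k \<le> 2*n+4" "x = psi n f k" "x \<notin> sinks n"
  proof (elim UnE imageE)
    fix j assume "j \<in> {1..n}" "x = (0, 1, - int j)"
    then show thesis by (intro that[of j]) (auto simp: psi_def sinks_def)
  next
    fix j assume "j \<in> {0..n}" "x = (f j, - f j, - int j)"
    then show thesis by (intro that[of "2*n+4-j"]) (auto simp: psi_def sinks_def)
  qed
  then show "x \<in> Uset n f" unfolding Uset_def by auto
qed

lemma piD_eq:
  assumes "f 0 = 0" "f n = 0"
  shows "piD p r n f g = p^2 * (1-p)^(2*n+1) * (1-r)^n * (\<Prod>k\<in>{0..n}. rr r (g k))"
proof -
  let ?A = "(\<lambda>k. (0, 1, - int k)) ` {1..n}"
  let ?B = "(\<lambda>k. (f k, - f k, - int k)) ` {0..n}"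
  have U: "Uset n f = ?A \<union> ?B" by (rule Uset_eq[OF assms])
  have disj: "?A \<inter> ?B = {}" by auto
  have injA: "inj_on (\<lambda>k. (0::int, 1::int, - int k)) {1..n}" by (auto simp: inj_on_def)
  have injB: "inj_on (\<lambda>k. (f k, - f k, - int k)) {0..n}" by (auto simp: inj_on_def)
  have card: "card (Uset n f) = 2*n+1"
    unfolding U using card_image[OF injA] card_image[OF injB] disj
    by (simp add: card_Un_disjoint)
  have kA: "kappa n f g (0, 1, - int k) = 2" if "k \<in> {1..n}" for k
    using that by (auto simp: kappa_def sinks_def)
  have kB: "kappa n f g (f k, - f k, - int k) = g k" if "k \<in> {0..n}" for k
    using that by (auto simp: kappa_def sinks_def)
  have "(\<Prod>i\<in>Uset n f. rr r (kappa n f g i))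
          = (\<Prod>i\<in>?A. rr r (kappa n f g i)) * (\<Prod>i\<in>?B. rr r (kappa n f g i))"
    unfolding U by (rule prod.union_disjoint) (use disj in auto)
  also have "(\<Prod>i\<in>?A. rr r (kappa n f g i)) = (1-r)^n"
    by (subst prod.reindex[OF injA]) (simp add: kA rr_def)
  also have "(\<Prod>i\<in>?B. rr r (kappa n f g i)) = (\<Prod>k\<in>{0..n}. rr r (g k))"
    by (subst prod.reindex[OF injB]) (simp add: kB)
  finally show ?thesis unfolding piD_def card by simp
qed

lemma hatD0_abs_le:
  assumes "(f, g) \<in> hatD0 n" "k \<le> n"
  shows "\<bar>f k\<bar> \<le> int k"
  using assms(2)
proof (induction k)
  case 0
  then show ?case using assms(1) by (simp add: hatD0_def)
next
  case (Suc k)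
  have "\<bar>f (Suc k) - f k\<bar> \<le> 1"
    using assms(1) Suc.prems unfolding hatD0_def by (auto dest!: bspec[where x="Suc k"])
  with Suc show ?case by linarith
qed

lemma finite_hatD0: "finite (hatD0 n)"
proof (rule finite_subset)
  let ?F = "{f. \<forall>k. (k \<in> {0..n} \<longrightarrow> f k \<in> {- int n..int n}) \<and> (k \<notin> {0..n} \<longrightarrow> f k = 0)}"
  let ?G = "{g. \<forall>k. (k \<in> {0..n} \<longrightarrow> g k \<in> {1..2::nat}) \<and> (k \<notin> {0..n} \<longrightarrow> g k = 1)}"
  show "finite (?F \<times> ?G)"
    by (intro finite_cartesian_product finite_set_of_finite_funs) auto
  show "hatD0 n \<subseteq> ?F \<times> ?G"
  proof clarify
    fix f g assume fg: "(f, g) \<in> hatD0 n"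
    then have "- int n \<le> f k \<and> f k \<le> int n" if "k \<le> n" for k
      using hatD0_abs_le[OF fg that] that by linarith
    with fg show "f \<in> ?F \<and> g \<in> ?G" unfolding hatD0_def by auto
  qed
qed

lemma piD_nonneg:
  assumes "0 \<le> p" "p \<le> 1" "0 \<le> r" "r \<le> 1"
  shows "0 \<le> piD p r n f g"
  unfolding piD_def rr_def using assms by (intro mult_nonneg_nonneg prod_nonneg) auto

lemma sum_lessThan_add: "(\<Sum>i<m+k. h i) = (\<Sum>i<m. h i) + (\<Sum>i<k. h (m+i))"
  for h :: "nat \<Rightarrow> 'a::comm_monoid_add"
  by (induction k) (auto simp: add_ac)

lemma prod_lessThan_add: "(\<Prod>i<m+k. h i) = (\<Prod>i<m. h i) * (\<Prod>i<k. h (m+i))"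
  for h :: "nat \<Rightarrow> 'a::comm_monoid_mult"
  by (induction k) (auto simp: mult_ac)

text \<open>Letters 0, 1, 2, 3 stand for a level step, an up step, a down step and a level step with
  label 2.  The letter i of a word of length N becomes the step from i+1 to i+2 and the label
  g (i+1) of a path; the first step is level with label 1 because g 0 = 1 is forced.\<close>

definition letter_step :: "nat \<Rightarrow> int" where
  "letter_step c = (if c = 1 then 1 else if c = 2 then -1 else 0)"

definition letter_label :: "nat \<Rightarrow> nat" where
  "letter_label c = (if c = 3 then 2 else 1)"

definition letter_flip :: "nat \<Rightarrow> nat" where
  "letter_flip c = (if c = 1 then 2 else if c = 2 then 1 else c)"

definition words :: "nat \<Rightarrow> (nat \<Rightarrow> nat) set" where
  "words N = PiE {..<N} (\<lambda>_. {0..3})"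

definition word_height :: "nat \<Rightarrow> (nat \<Rightarrow> nat) \<Rightarrow> int" where
  "word_height N w = (\<Sum>i<N. letter_step (w i))"

definition word_weight :: "real \<Rightarrow> nat \<Rightarrow> (nat \<Rightarrow> nat) \<Rightarrow> real" where
  "word_weight r N w = (\<Prod>i<N. rr r (letter_label (w i)))"

definition word_path :: "nat \<Rightarrow> (nat \<Rightarrow> nat) \<Rightarrow> (nat \<Rightarrow> int) \<times> (nat \<Rightarrow> nat)" where
  "word_path N w =
     ((\<lambda>k. \<Sum>i<k. if i \<in> {1..N} then letter_step (w (i - 1)) else 0),
      (\<lambda>k. if k \<in> {1..N} then letter_label (w (k - 1)) else 1))"

lemma letter_eqI:
  assumes "c \<le> 3" "c' \<le> 3" "letter_step c = letter_step c'" "letter_label c = letter_label c'"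
  shows "c = c'"
proof -
  have "c \<in> {0, 1, 2, 3}" "c' \<in> {0, 1, 2, 3}" using assms(1,2) by auto
  then show ?thesis using assms(3,4) by (auto simp: letter_step_def letter_label_def)
qed

lemma letter_flip_flip: "letter_flip (letter_flip c) = c"
  by (simp add: letter_flip_def)

lemma word_height_abs_le: "\<bar>word_height N w\<bar> \<le> int N"
proof -
  have "\<bar>word_height N w\<bar> \<le> (\<Sum>i<N. \<bar>letter_step (w i)\<bar>)"
    unfolding word_height_def by (rule sum_abs)
  also have "\<dots> \<le> (\<Sum>i<N. 1)" by (intro sum_mono) (simp add: letter_step_def)
  finally show ?thesis by simp
qed

lemma sum_word_weight: "(\<Sum>w\<in>words N. word_weight r N w) = (1 + 2*r)^N"
proof -
  have "(\<Sum>w\<in>words N. word_weight r N w) = (\<Prod>i<N. \<Sum>c\<in>{0..3}. rr r (letter_label c))"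
    unfolding words_def word_weight_def by (subst prod_sum_PiE) auto
  also have "{0..3::nat} = {0, 1, 2, 3}" by auto
  finally show ?thesis by (simp add: rr_def letter_label_def add.commute)
qed

lemma word_path_fst_Suc:
  "fst (word_path N w) (Suc k) = fst (word_path N w) k + (if k \<in> {1..N} then letter_step (w (k - 1)) else 0)"
  by (simp add: word_path_def)

lemma word_path_fst_eq_height:
  assumes "N < k"
  shows "fst (word_path N w) k = word_height N w"
proof -
  have "fst (word_path N w) k = (\<Sum>i<Suc N. if i \<in> {1..N} then letter_step (w (i - 1)) else 0)"
    unfolding word_path_def fst_conv using assms by (intro sum.mono_neutral_right) auto
  also have "\<dots> = word_height N w"
    by (subst sum.lessThan_Suc_shift) (simp add: word_height_def)
  finally show ?thesis .
qed

lemma word_path_in_hatD0: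
  assumes "N < n" "word_height N w = 0"
  shows "word_path N w \<in> hatD0 n"
proof -
  obtain f g where fg: "word_path N w = (f, g)" by fastforce
  have step: "f (Suc k) - f k = (if k \<in> {1..N} then letter_step (w (k - 1)) else 0)" for k
    using word_path_fst_Suc[of N w k] fg by simp
  have g: "g k = (if k \<in> {1..N} then letter_label (w (k - 1)) else 1)" for k
    using fg by (auto simp: word_path_def)
  have beyond: "f k = 0" if "N < k" for k
    using word_path_fst_eq_height[OF that, of w] assms(2) fg by simp
  have "\<bar>f k - f (k - 1)\<bar> \<le> 1" if "k \<in> {1..n}" for k
    using that step[of "k - 1"] by (cases k) (auto simp: letter_step_def)
  moreover have "g k = 1" if "f (k + 1) - f k \<in> {-1, 1}" for k
    using that step[of k] g[of k] by (auto simp: letter_step_def letter_label_def split: if_splits)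
  moreover have "f 0 = 0" using fg by (auto simp: word_path_def)
  ultimately show ?thesis
    unfolding fg hatD0_def using assms(1) beyond g by (auto simp: letter_label_def)
qed

lemma word_path_eqD:
  assumes "word_path N w = word_path N w'" "\<forall>i<N. w i \<le> 3" "\<forall>i<N. w' i \<le> 3" "i < N"
  shows "w i = w' i"
proof (rule letter_eqI)
  show "w i \<le> 3" "w' i \<le> 3" using assms by auto
  have "fst (word_path N w) (Suc (Suc i)) - fst (word_path N w) (Suc i)
          = fst (word_path N w') (Suc (Suc i)) - fst (word_path N w') (Suc i)"
    using assms(1) by simp
  then show "letter_step (w i) = letter_step (w' i)"
    using assms(4) by (simp only: word_path_fst_Suc) simp
  show "letter_label (w i) = letter_label (w' i)"
    using arg_cong[OF assms(1), of "\<lambda>P. snd P (Suc i)"] assms(4) by (simp add: word_path_def)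
qed

lemma prod_word_path_labels:
  assumes "N < n"
  shows "(\<Prod>k\<in>{0..n}. rr r (snd (word_path N w) k)) = r^(n - N + 1) * word_weight r N w"
proof -
  define h where "h k = rr r (snd (word_path N w) (Suc k))" for k
  have "(\<Prod>k\<in>{0..n}. rr r (snd (word_path N w) k)) = rr r (snd (word_path N w) 0) * (\<Prod>k<n. h k)"
    unfolding h_def atLeast0AtMost by (rule prod.atMost_shift)
  also have "rr r (snd (word_path N w) 0) = r" by (simp add: word_path_def rr_def)
  also have "(\<Prod>k<n. h k) = (\<Prod>k<N. h k) * (\<Prod>k<n - N. h (N + k))"
    using prod_lessThan_add[of h N "n - N"] assms by simp
  also have "(\<Prod>k<N. h k) = word_weight r N w"
    unfolding word_weight_def h_def by (rule prod.cong) (auto simp: word_path_def)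
  also have "(\<Prod>k<n - N. h (N + k)) = r^(n - N)"
    by (simp add: h_def word_path_def rr_def)
  finally show ?thesis by (simp add: mult_ac)
qed

definition mirror_append :: "nat \<Rightarrow> (nat \<Rightarrow> nat) \<Rightarrow> (nat \<Rightarrow> nat) \<Rightarrow> nat \<Rightarrow> nat" where
  "mirror_append m x y i = (if i < m then x i else letter_flip (y (i - m)))"

lemma word_height_mirror_append:
  "word_height (2*m) (mirror_append m x y) = word_height m x - word_height m y"
proof -
  have "word_height (2*m) (mirror_append m x y)
          = word_height m x + (\<Sum>i<m. letter_step (letter_flip (y i)))"
    using sum_lessThan_add[of "\<lambda>i. letter_step (mirror_append m x y i)" m m]
    by (simp add: mult_2 word_height_def mirror_append_def)
  also have "(\<Sum>i<m. letter_step (letter_flip (y i))) = - word_height m y"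
    unfolding word_height_def sum_negf[symmetric]
    by (rule sum.cong) (auto simp: letter_step_def letter_flip_def)
  finally show ?thesis by simp
qed

lemma word_weight_mirror_append:
  "word_weight r (2*m) (mirror_append m x y) = word_weight r m x * word_weight r m y"
proof -
  have "word_weight r (2*m) (mirror_append m x y)
          = word_weight r m x * (\<Prod>i<m. rr r (letter_label (letter_flip (y i))))"
    using prod_lessThan_add[of "\<lambda>i. rr r (letter_label (mirror_append m x y i))" m m]
    by (simp add: mult_2 word_weight_def mirror_append_def)
  also have "(\<Prod>i<m. rr r (letter_label (letter_flip (y i)))) = word_weight r m y"
    unfolding word_weight_def by (rule prod.cong) (auto simp: letter_label_def letter_flip_def)
  finally show ?thesis .
qed

lemma inj_on_word_path_mirror_append:
  "inj_on (\<lambda>(x, y). word_path (2*m) (mirror_append m x y)) (words m \<times> words m)"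
proof (rule inj_onI, clarify)
  fix x y x' y'
  assume xy: "x \<in> words m" "y \<in> words m" "x' \<in> words m" "y' \<in> words m"
    and eq: "word_path (2*m) (mirror_append m x y) = word_path (2*m) (mirror_append m x' y')"
  have letters: "\<forall>i<2*m. mirror_append m a b i \<le> 3" if "a \<in> words m" "b \<in> words m" for a b
  proof clarify
    fix i assume "i < 2*m"
    then have "if i < m then a i \<le> 3 else b (i - m) \<le> 3"
      using that by (auto simp: words_def PiE_iff)
    then show "mirror_append m a b i \<le> 3"
      by (auto simp: mirror_append_def letter_flip_def split: if_splits)
  qed
  have agree: "mirror_append m x y i = mirror_append m x' y' i" if "i < 2*m" for i
    using word_path_eqD[OF eq letters[OF xy(1,2)] letters[OF xy(3,4)] that] .
  have "x i = x' i" if "i < m" for i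
    using agree[of i] that by (simp add: mirror_append_def)
  moreover have "y i = y' i" if "i < m" for i
  proof -
    have "letter_flip (y i) = letter_flip (y' i)"
      using agree[of "m + i"] that by (simp add: mirror_append_def)
    then show ?thesis by (metis letter_flip_flip)
  qed
  ultimately show "x = x' \<and> y = y'"
    using xy unfolding words_def by (metis PiE_ext lessThan_iff)
qed

lemma sum_pairs_same_key_ge:
  fixes w :: "'a \<Rightarrow> real" and key :: "'a \<Rightarrow> 'b"
  assumes "finite A" "finite J" "key ` A \<subseteq> J"
  shows "(\<Sum>x\<in>A. w x)^2 / card J \<le> (\<Sum>(x, y)\<in>{(x, y) \<in> A \<times> A. key x = key y}. w x * w y)"
proof -
  define C where "C j = (\<Sum>y\<in>{y \<in> A. key y = j}. w y)" for j
  have "{(x, y) \<in> A \<times> A. key x = key y} = (SIGMA x:A. {y \<in> A. key y = key x})" by auto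
  then have "(\<Sum>(x, y)\<in>{(x, y) \<in> A \<times> A. key x = key y}. w x * w y) = (\<Sum>x\<in>A. w x * C (key x))"
    using assms(1) by (simp add: sum.Sigma[symmetric] C_def sum_distrib_left)
  also have "\<dots> = (\<Sum>j\<in>J. \<Sum>x\<in>{x \<in> A. key x = j}. w x * C (key x))"
    by (rule sum.group[symmetric, OF assms])
  also have "\<dots> = (\<Sum>j\<in>J. (C j)^2)"
    by (rule sum.cong) (auto simp: C_def sum_distrib_right power2_eq_square)
  finally have pairs: "(\<Sum>(x, y)\<in>{(x, y) \<in> A \<times> A. key x = key y}. w x * w y) = (\<Sum>j\<in>J. (C j)^2)" .
  have "(\<Sum>x\<in>A. w x) = (\<Sum>j\<in>J. C j * 1)"
    unfolding C_def using sum.group[OF assms, of w] by simp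
  also have "(\<Sum>j\<in>J. C j * 1)^2 \<le> (\<Sum>j\<in>J. (C j)^2) * (\<Sum>j\<in>J. 1^2)"
    by (rule Cauchy_Schwarz_ineq_sum)
  finally have "(\<Sum>x\<in>A. w x)^2 \<le> (\<Sum>j\<in>J. (C j)^2) * card J" by simp
  moreover have "0 \<le> (\<Sum>j\<in>J. (C j)^2)" by (simp add: sum_nonneg)
  ultimately show ?thesis unfolding pairs
    by (cases "card J = 0") (simp_all add: divide_le_eq)
qed

lemma piD_word_path_ge:
  assumes n: "N < n" "n \<le> N + 2" and h: "word_height N w = 0"
    and p: "0 \<le> p" "p \<le> 1" and r: "0 \<le> r" "r \<le> 1"
  shows "p^2 * (1-p)^(2*n+1) * (1-r)^n * r^3 * word_weight r N w
           \<le> piD p r n (fst (word_path N w)) (snd (word_path N w))"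
proof -
  have W0: "0 \<le> word_weight r N w"
    unfolding word_weight_def rr_def using r by (intro prod_nonneg) auto
  have "r^3 \<le> r^(n - N + 1)" using n r by (intro power_decreasing) auto
  then have "r^3 * word_weight r N w \<le> r^(n - N + 1) * word_weight r N w"
    using W0 by (rule mult_right_mono)
  then have "p^2 * (1-p)^(2*n+1) * (1-r)^n * r^3 * word_weight r N w
               \<le> p^2 * (1-p)^(2*n+1) * (1-r)^n * (r^(n - N + 1) * word_weight r N w)"
    unfolding mult.assoc using p r by (intro mult_left_mono) auto
  also have "\<dots> = piD p r n (fst (word_path N w)) (snd (word_path N w))"
  proof -
    obtain f g where fg: "word_path N w = (f, g)" by fastforce
    have "(f, g) \<in> hatD0 n" using word_path_in_hatD0[OF n(1) h] fg by simp
    then have "f 0 = 0" "f n = 0" by (auto simp: hatD0_def)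
    then show ?thesis using fg prod_word_path_labels[OF n(1), of r w] by (simp add: piD_eq)
  qed
  finally show ?thesis .
qed

lemma sum_equal_height_pairs_ge:
  "(1 + 2*r)^(2*m) / real (2*m+1)
     \<le> (\<Sum>(x, y)\<in>{(x, y) \<in> words m \<times> words m. word_height m x = word_height m y}.
           word_weight r m x * word_weight r m y)"
proof -
  have "word_height m ` words m \<subseteq> {- int m..int m}"
  proof (rule image_subsetI)
    fix w show "word_height m w \<in> {- int m..int m}"
      using word_height_abs_le[of m w] unfolding atLeastAtMost_iff by linarith
  qed
  then have "(\<Sum>x\<in>words m. word_weight r m x)^2 / card {- int m..int m}
     \<le> (\<Sum>(x, y)\<in>{(x, y) \<in> words m \<times> words m. word_height m x = word_height m y}.
           word_weight r m x * word_weight r m y)"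
    by (intro sum_pairs_same_key_ge) (simp_all add: words_def finite_PiE)
  then show ?thesis
    by (simp add: sum_word_weight power_mult[symmetric] ac_simps)
qed

lemma sum_piD_ge_mirror_paths:
  assumes n: "2*m < n" "n \<le> 2*m + 2"
    and p: "0 \<le> p" "p \<le> 1" and r: "0 \<le> r" "r \<le> 1"
  shows "p^2 * (1-p)^(2*n+1) * (1-r)^n * r^3 * ((1 + 2*r)^(2*m) / real (2*m+1))
           \<le> (\<Sum>(f, g)\<in>hatD0 n. piD p r n f g)"
proof -
  define c where "c = p^2 * (1-p)^(2*n+1) * (1-r)^n * r^3"
  define B where "B = {(x, y) \<in> words m \<times> words m. word_height m x = word_height m y}"
  define \<Phi> where "\<Phi> = (\<lambda>(x, y). word_path (2*m) (mirror_append m x y))"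
  define h where "h = (\<lambda>(f, g). piD p r n f g)"
  have c0: "0 \<le> c" using p r by (simp add: c_def)
  have in_hatD0: "\<Phi> z \<in> hatD0 n" if "z \<in> B" for z
    using that n by (auto simp: \<Phi>_def B_def word_height_mirror_append intro!: word_path_in_hatD0)
  have inj: "inj_on \<Phi> B"
    unfolding \<Phi>_def by (rule inj_on_subset[OF inj_on_word_path_mirror_append]) (auto simp: B_def)
  have weight: "c * (word_weight r m x * word_weight r m y) \<le> h (\<Phi> (x, y))" if "(x, y) \<in> B" for x y
    using piD_word_path_ge[of "2*m" n "mirror_append m x y", OF _ _ _ p r] that n
    by (simp add: c_def h_def \<Phi>_def B_def case_prod_beta word_height_mirror_append word_weight_mirror_append)
  have "c * ((1 + 2*r)^(2*m) / real (2*m+1)) \<le> c * (\<Sum>(x, y)\<in>B. word_weight r m x * word_weight r m y)"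
    unfolding B_def using sum_equal_height_pairs_ge c0 by (rule mult_left_mono)
  also have "\<dots> = (\<Sum>z\<in>B. c * (case z of (x, y) \<Rightarrow> word_weight r m x * word_weight r m y))"
    by (simp add: sum_distrib_left)
  also have "\<dots> \<le> (\<Sum>z\<in>B. h (\<Phi> z))"
    by (rule sum_mono) (use weight in auto)
  also have "\<dots> = (\<Sum>z\<in>\<Phi> ` B. h z)"
    by (simp add: sum.reindex[OF inj])
  also have "\<dots> \<le> (\<Sum>z\<in>hatD0 n. h z)"
    using in_hatD0 piD_nonneg[OF p r]
    by (intro sum_mono2[OF finite_hatD0]) (auto simp: h_def split: prod.splits)
  finally show ?thesis by (simp add: c_def h_def ac_simps)
qed

lemma sum_piD_ge_exponential:
  assumes n: "1 \<le> n" and p: "0 \<le> p" "p \<le> 1" and r: "0 \<le> r" "r \<le> 1"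
  shows "p^2 * (1-p) * r^3 / (1 + 2*r)^2 * ((1-p)^2 * (1-r) * (1 + 2*r))^n / (real n + 1)
           \<le> (\<Sum>(f, g)\<in>hatD0 n. piD p r n f g)"
proof -
  define m where "m = (n - 1) div 2"
  have m: "2*m < n" "n \<le> 2*m + 2" using n unfolding m_def by auto
  define c where "c = p^2 * (1-p)^(2*n+1) * (1-r)^n * r^3"
  define b where "b = 1 + 2*r"
  have c0: "0 \<le> c" using p r by (simp add: c_def)
  have b1: "1 \<le> b" using r by (simp add: b_def)
  have "((1-p)^2 * (1-r) * b)^n = (1-p)^(2*n) * (1-r)^n * b^n"
    by (simp add: power_mult_distrib power_mult)
  then have "p^2 * (1-p) * r^3 / b^2 * ((1-p)^2 * (1-r) * b)^n / (real n + 1) = c * (b^n / b^2 / (real n + 1))"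
    by (simp add: c_def)
  also have "\<dots> \<le> c * (b^(2*m) / real (2*m+1))"
  proof (rule mult_left_mono[OF _ c0])
    have "b^n \<le> b^(2*m + 2)"
      using b1 m by (intro power_increasing) auto
    then have "b^n \<le> b^(2*m) * b^2" by (simp only: power_add)
    then have "b^n / b^2 \<le> b^(2*m)" using b1 by (simp add: divide_le_eq)
    then show "b^n / b^2 / (real n + 1) \<le> b^(2*m) / real (2*m+1)"
      using m b1 by (intro frac_le) auto
  qed
  also have "\<dots> \<le> (\<Sum>(f, g)\<in>hatD0 n. piD p r n f g)"
    using sum_piD_ge_mirror_paths[OF m p r] by (simp add: c_def b_def add.commute)
  finally show ?thesis by (simp add: b_def)
qed

lemma liminf_root_ge:
  fixes a :: "nat \<Rightarrow> real"
  assumes K: "0 < K" and Q: "0 < Q"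
    and bound: "\<forall>\<^sub>F n in sequentially. K * Q^n / (real n + 1) \<le> a n"
  shows "ereal Q \<le> liminf (\<lambda>n. ereal (a n powr (1 / real n)))"
proof -
  have "(\<lambda>n. (K / (real n + 1)) powr (1 / real n)) \<longlonglongrightarrow> 1"
    using K by real_asymp
  then have lim: "(\<lambda>n. ereal ((K / (real n + 1)) powr (1 / real n) * Q)) \<longlonglongrightarrow> ereal Q"
    using tendsto_mult_right[of _ 1 _ Q] by (simp add: lim_ereal)
  have "\<forall>\<^sub>F n in sequentially. ereal ((K / (real n + 1)) powr (1 / real n) * Q) \<le> ereal (a n powr (1 / real n))"
    using bound eventually_ge_at_top[of 1]
  proof eventually_elim
    case (elim n)
    have "(Q^n) powr (1 / real n) = Q"
      using Q elim by (simp add: powr_realpow[symmetric] powr_powr)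
    moreover have "(K / (real n + 1) * Q^n) powr (1 / real n)
                     = (K / (real n + 1)) powr (1 / real n) * (Q^n) powr (1 / real n)"
      by (rule powr_mult)
    ultimately have "(K / (real n + 1)) powr (1 / real n) * Q = (K * Q^n / (real n + 1)) powr (1 / real n)"
      by simp
    also have "\<dots> \<le> a n powr (1 / real n)"
      using elim K Q by (intro powr_mono2) auto
    finally show ?case by simp
  qed
  then have "liminf (\<lambda>n. ereal ((K / (real n + 1)) powr (1 / real n) * Q))
               \<le> liminf (\<lambda>n. ereal (a n powr (1 / real n)))"
    by (rule Liminf_mono)
  then show ?thesis
    by (simp only: lim_imp_Liminf[OF trivial_limit_sequentially lim])
qed

lemma three_powr_le:
  fixes r :: real
  assumes "0 \<le> r" "r \<le> 1"
  shows "3 powr r \<le> 1 + 2*r"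
proof -
  have "exp ((1 - r) *\<^sub>R 0 + r *\<^sub>R ln 3) \<le> (1 - r) * exp 0 + r * exp (ln 3)"
    using convex_onD[OF exp_convex, of r 0 "ln 3"] assms by simp
  then show ?thesis by (simp add: powr_def algebra_simps)
qed

theorem mainTheorem13:
  fixes p r :: real
  assumes "0 < p" "p \<le> 1" "0 < r" "r \<le> 1"
  shows "liminf (\<lambda>n. ereal ((\<Sum>(f, g)\<in>hatD0 n. piD p r n f g) powr (1 / real n)))
           \<ge> ereal (3 powr r * (1 - r) * (1 - p) ^ 2)"
proof -
  define Q where "Q = (1-p)^2 * (1-r) * (1 + 2*r)"
  have "3 powr r * ((1 - r) * (1 - p)^2) \<le> (1 + 2*r) * ((1 - r) * (1 - p)^2)"
    using three_powr_le[of r] assms by (intro mult_right_mono) auto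
  then have "3 powr r * (1 - r) * (1 - p)^2 \<le> Q"
    unfolding Q_def by (simp add: mult_ac)
  moreover have "ereal Q \<le> liminf (\<lambda>n. ereal ((\<Sum>(f, g)\<in>hatD0 n. piD p r n f g) powr (1 / real n)))"
  proof (cases "p = 1 \<or> r = 1")
    case True
    then show ?thesis by (auto simp: Q_def intro: Liminf_bounded)
  next
    case False
    then have "p < 1" "r < 1" using assms by auto
    show ?thesis
    proof (rule liminf_root_ge)
      show "0 < p^2 * (1-p) * r^3 / (1 + 2*r)^2" "0 < Q"
        using assms \<open>p < 1\<close> \<open>r < 1\<close> by (simp_all add: Q_def)
      show "\<forall>\<^sub>F n in sequentially. p^2 * (1-p) * r^3 / (1 + 2*r)^2 * Q^n / (real n + 1)
              \<le> (\<Sum>(f, g)\<in>hatD0 n. piD p r n f g)"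
        unfolding eventually_sequentially Q_def
        using sum_piD_ge_exponential assms by (meson less_imp_le)
    qed
  qed
  ultimately show ?thesis by (meson ereal_less_eq(3) order_trans)
qed

end
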